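(* Under the assumptions below, let $y_{\varrho h}\in Y_h$ be the unique Galerkin solution with $\varrho=h^{2\alpha}$. Then there is a constant $c>0$ independent of $h$ and $\overline{y}$ such that $$\|y_{\varrho h}-\overline{y}\|_{H_Y}\le c\begin{cases}\|\overline{y}\|_{H_Y}&\text{for }\overline{y}\in H_Y,\\ h^\alpha\|\overline{y}\|_D&\text{for }\overline{y}\in Y,\\ h^{2\alpha}\|D\overline{y}\|_{H_Y}&\text{for }\overline{y}\in Y,\ D\overline{y}\in H_Y.\end{cases}$$ Moreover, if $\overline{y}\in[H_Y,Y]_s$ for some $s\in[0,1]$, then $\|y_{\varrho h}-\overline{y}\|_{H_Y}\le c\,h^{\alpha s}\|\overline{y}\|_{[H_Y,Y]_s}$.
   Context: Abstract setting: Let $Y\subset H_Y\subset Y^*$ be a Gelfand triple of real Hilbert spaces, with duality pairing $\langle\cdot,\cdot\rangle_{Y^*,Y}$ extending the inner product of $H_Y$. Let $D:Y\to Y^*$ be bounded, linear, self-adjoint and elliptic, $\|y\|_D:=\langle Dy,y\rangle_{Y^*,Y}^{1/2}$ (an equivalent norm on $Y$). For $y\in Y$ we write "$Dy\in H_Y$" if there is $w\in H_Y$ with $\langle Dy,v\rangle_{Y^*,Y}=\langle w,v\rangle_{H_Y}$ for all $v\in Y$, and then $\|Dy\|_{H_Y}:=\|w\|_{H_Y}$. Discretization: For each discretization parameter $h\in(0,h_0]$ let $Y_h\subset Y$ be a finite-dimensional subspace, and assume there are maps $P_h:Y\to Y_h$, an exponent $\alpha>0$ and constants $c_1,c_2,c_3,c_4>0$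 independent of $h$ such that for all $y\in Y$: $\|y-P_hy\|_{H_Y}\le c_1h^\alpha\|y\|_D$ and $\|y-P_hy\|_D\le c_2\|y\|_D$; and, if in addition $Dy\in H_Y$: $\|y-P_hy\|_{H_Y}\le c_3h^{2\alpha}\|Dy\|_{H_Y}$ and $\|y-P_hy\|_D\le c_4h^\alpha\|Dy\|_{H_Y}$. Given $\overline{y}\in H_Y$ and $\varrho>0$, the Galerkin solution $y_{\varrho h}\in Y_h$ satisfies $\langle y_{\varrho h},y_h\rangle_{H_Y}+\varrho\langle Dy_{\varrho h},y_h\rangle_{Y^*,Y}=\langle\overline{y},y_h\rangle_{H_Y}$ for all $y_h\in Y_h$. $[H_Y,Y]_s$, $s\in[0,1]$, denotes the interpolation space between $H_Y$ and $Y$ (with $Y$ normed by $\|\cdot\|_D$) obtained by an exact interpolation method of exponent $s$ (e.g. the real $K$-method), with $[H_Y,Y]_0=H_Y$ and $[H_Y,Y]_1=Y$. *)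

theory Defs
  imports "HOL-Analysis.Analysis"
begin

text \<open>The pivot space H_Y is the type 'a (a real Hilbert space).
 Y is a linear subspace of 'a carrying its own Hilbert norm nY (induced by the inner
 product iY), densely and continuously embedded in H_Y (Gelfand triple Y \<subseteq> H_Y \<subseteq> Y*).
 The operator D : Y \<rightarrow> Y* is represented by its bilinear form a y v = <D y, v>_{Y*,Y}.\<close>

definition gelfand_setting ::
  "'a::{real_inner,complete_space} set \<Rightarrow> ('a \<Rightarrow> 'a \<Rightarrow> real) \<Rightarrow> ('a \<Rightarrow> 'a \<Rightarrow> real) \<Rightarrow> bool" where
  "gelfand_setting Y iY a \<longleftrightarrow>
     subspace Y \<and>
     \<comment> \<open>iY is an inner product on Y\<close>
     (\<forall>x\<in>Y. \<forall>y\<in>Y. iY x y = iY y x) \<and>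
     (\<forall>x\<in>Y. \<forall>y\<in>Y. \<forall>z\<in>Y. \<forall>r::real. iY (r *\<^sub>R x + y) z = r * iY x z + iY y z) \<and>
     (\<forall>x\<in>Y. x \<noteq> 0 \<longrightarrow> iY x x > 0) \<and>
     \<comment> \<open>Y is complete w.r.t. its norm sqrt (iY y y)\<close>
     (\<forall>X::nat \<Rightarrow> 'a. (\<forall>n. X n \<in> Y) \<and>
        (\<forall>e>0. \<exists>N. \<forall>m\<ge>N. \<forall>n\<ge>N. sqrt (iY (X m - X n) (X m - X n)) < e) \<longrightarrow>
        (\<exists>y\<in>Y. (\<lambda>n. sqrt (iY (X n - y) (X n - y))) \<longlonglongrightarrow> 0)) \<and>
     \<comment> \<open>continuous and dense embedding Y \<subseteq> H_Y\<close>
     (\<exists>C. \<forall>y\<in>Y. norm y \<le> C * sqrt (iY y y)) \<and>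
     closure Y = UNIV \<and>
     \<comment> \<open>D is linear, bounded, self-adjoint and elliptic\<close>
     (\<forall>x\<in>Y. \<forall>y\<in>Y. a x y = a y x) \<and>
     (\<forall>x\<in>Y. \<forall>y\<in>Y. \<forall>z\<in>Y. \<forall>r::real. a (r *\<^sub>R x + y) z = r * a x z + a y z) \<and>
     (\<exists>M. \<forall>x\<in>Y. \<forall>y\<in>Y. \<bar>a x y\<bar> \<le> M * sqrt (iY x x) * sqrt (iY y y)) \<and>
     (\<exists>m>0. \<forall>y\<in>Y. a y y \<ge> m * iY y y)"

definition normD :: "('a \<Rightarrow> 'a \<Rightarrow> real) \<Rightarrow> 'a \<Rightarrow> real" where
  "normD a y = sqrt (a y y)"

text \<open>"D y \<in> H_Y" with representative w (then \<parallel>D y\<parallel>_{H_Y} = norm w).\<close>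
definition D_rep :: "'a::real_inner set \<Rightarrow> ('a \<Rightarrow> 'a \<Rightarrow> real) \<Rightarrow> 'a \<Rightarrow> 'a \<Rightarrow> bool" where
  "D_rep Y a y w \<longleftrightarrow> y \<in> Y \<and> (\<forall>v\<in>Y. a y v = inner w v)"

definition discretization ::
  "'a::real_inner set \<Rightarrow> ('a \<Rightarrow> 'a \<Rightarrow> real) \<Rightarrow> real \<Rightarrow> (real \<Rightarrow> 'a set) \<Rightarrow> (real \<Rightarrow> 'a \<Rightarrow> 'a)
     \<Rightarrow> real \<Rightarrow> bool" where
  "discretization Y a h0 Yh P \<alpha> \<longleftrightarrow> h0 > 0 \<and> \<alpha> > 0 \<and>
     (\<forall>h\<in>{0<..h0}. subspace (Yh h) \<and> Yh h \<subseteq> Y \<and> (\<exists>B. finite B \<and> Yh h = span B)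
        \<and> (\<forall>y\<in>Y. P h y \<in> Yh h)) \<and>
     (\<exists>c1>0. \<exists>c2>0. \<exists>c3>0. \<exists>c4>0. \<forall>h\<in>{0<..h0}. \<forall>y\<in>Y.
        norm (y - P h y) \<le> c1 * h powr \<alpha> * normD a y \<and>
        normD a (y - P h y) \<le> c2 * normD a y \<and>
        (\<forall>w. D_rep Y a y w \<longrightarrow>
           norm (y - P h y) \<le> c3 * h powr (2 * \<alpha>) * norm w \<and>
           normD a (y - P h y) \<le> c4 * h powr \<alpha> * norm w))"

definition galerkin_sol ::
  "('a \<Rightarrow> 'a \<Rightarrow> real) \<Rightarrow> 'a::real_inner set \<Rightarrow> real \<Rightarrow> 'a \<Rightarrow> 'a \<Rightarrow> bool" where
  "galerkin_sol a Yh \<rho> ybar y \<longleftrightarrow> y \<in> Yh \<and>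
     (\<forall>v\<in>Yh. inner y v + \<rho> * a y v = inner ybar v)"

definition Kfun :: "'a::real_inner set \<Rightarrow> ('a \<Rightarrow> 'a \<Rightarrow> real) \<Rightarrow> real \<Rightarrow> 'a \<Rightarrow> real" where
  "Kfun Y a t y = Inf {norm y0 + t * normD a y1 | y0 y1. y1 \<in> Y \<and> y = y0 + y1}"

text \<open>Real K-method (q = 2), normalized so that it is an exact interpolation
 method of exponent s (the normalization makes [H,H]_s = H isometrically).\<close>
definition Kint :: "'a::real_inner set \<Rightarrow> ('a \<Rightarrow> 'a \<Rightarrow> real) \<Rightarrow> real \<Rightarrow> 'a \<Rightarrow> ennreal" where
  "Kint Y a s y = (\<integral>\<^sup>+ t. indicator {0<..} t *
       ennreal ((t powr (- s) * Kfun Y a t y)\<^sup>2 / t) \<partial>lborel)"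

definition interp_space :: "'a::real_inner set \<Rightarrow> ('a \<Rightarrow> 'a \<Rightarrow> real) \<Rightarrow> real \<Rightarrow> 'a set" where
  "interp_space Y a s =
     (if s = 0 then UNIV else if s = 1 then Y else {y. Kint Y a s y < \<infinity>})"

definition interp_norm :: "'a::real_inner set \<Rightarrow> ('a \<Rightarrow> 'a \<Rightarrow> real) \<Rightarrow> real \<Rightarrow> 'a \<Rightarrow> real" where
  "interp_norm Y a s y =
     (if s = 0 then norm y else if s = 1 then normD a y
      else sqrt (2 * s * (1 - s) * enn2real (Kint Y a s y)))"

end

theory Submission
  imports Defs
begin

text \<open>
With \<rho> = t^2 and t = h powr \<alpha>, the Galerkin solution y minimises
norm (z - ybar)^2 + \<rho> * a z z over z in Y_h. Testing with z = P_h y1 for a splitting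
ybar = y0 + y1 with y1 in Y bounds the error by a multiple of norm y0 + t * normD a y1, hence
by the K-functional K(t, ybar); the trivial splittings give the estimates for ybar in H_Y and
in Y. Since K(., ybar) is nondecreasing and K(t, ybar) / t is nonincreasing, the integral
defining the K-method, restricted to [t, \<infinity>) and to (0, t], already bounds
K(t, ybar) by sqrt 2 * t powr s times the interpolation norm.
If D ybar = w lies in H_Y, testing the Galerkin equation with y - P_h ybar and replacing
a ybar v by the inner product of w and v gives the estimate of order t^2.
\<close>

lemma sq_le_mult_add_sq_imp_le:
  fixes x A B :: real
  assumes "0 \<le> x" "0 \<le> A" "0 \<le> B" "x\<^sup>2 \<le> A * x + B\<^sup>2"
  shows "x \<le> A + B"
proof (rule ccontr)
  assume "\<not> x \<le> A + B"
  then have "(A + B) * x < x * x" "B * B \<le> B * x"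
    using assms by (auto intro!: mult_strict_right_mono mult_left_mono)
  with assms(4) show False by (simp add: power2_eq_square algebra_simps)
qed

lemma nn_integral_ge_has_integral:
  fixes f :: "real \<Rightarrow> real" and g :: "real \<Rightarrow> ennreal"
  assumes "(f has_integral I) S" "\<And>t. t \<in> S \<Longrightarrow> 0 \<le> f t" "\<And>t. t \<in> S \<Longrightarrow> ennreal (f t) \<le> g t"
  shows "ennreal I \<le> (\<integral>\<^sup>+t. g t \<partial>lborel)"
proof -
  have "ennreal I = (\<integral>\<^sup>+t. ennreal (f t) * indicator S t \<partial>lborel)"
    using nn_integral_has_integral_lebesgue'[OF assms(2,1)] by simp
  also have "\<dots> \<le> (\<integral>\<^sup>+t. g t \<partial>lborel)"
    by (intro nn_integral_mono) (simp add: assms(3) split: split_indicator)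
  finally show ?thesis .
qed

lemma powr_two_add: "0 < (x::real) \<Longrightarrow> x powr (2 + e) = x\<^sup>2 * x powr e"
  by (simp add: powr_add powr_numeral)

lemma Kint_integrand_eq:
  fixes t s k :: real
  assumes "0 < t"
  shows "(t powr (- s) * k)\<^sup>2 / t = k\<^sup>2 * t powr (- 2 * s - 1)"
  using assms by (simp add: power_mult_distrib powr_diff powr_powr[symmetric] powr_minus field_simps)

section \<open>Symmetric positive semidefinite forms\<close>

locale symmetric_psd_form =
  fixes Y :: "'a::real_inner set" and a :: "'a \<Rightarrow> 'a \<Rightarrow> real"
  assumes subspace: "subspace Y"
    and symmetric: "x \<in> Y \<Longrightarrow> y \<in> Y \<Longrightarrow> a x y = a y x"
    and linear_left: "x \<in> Y \<Longrightarrow> y \<in> Y \<Longrightarrow> z \<in> Y \<Longrightarrow> a (r *\<^sub>R x + y) z = r * a x z + a y z"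
    and nonneg: "y \<in> Y \<Longrightarrow> 0 \<le> a y y"
begin

lemma zero_mem: "0 \<in> Y"
  using subspace by (rule subspace_0)

lemma diff_mem: "x \<in> Y \<Longrightarrow> y \<in> Y \<Longrightarrow> x - y \<in> Y"
  using subspace by (rule subspace_diff)

lemma add_left: "x \<in> Y \<Longrightarrow> y \<in> Y \<Longrightarrow> z \<in> Y \<Longrightarrow> a (x + y) z = a x z + a y z"
  using linear_left[of x y z 1] by simp

lemma diff_left: "x \<in> Y \<Longrightarrow> y \<in> Y \<Longrightarrow> z \<in> Y \<Longrightarrow> a (x - y) z = a x z - a y z"
  using linear_left[of y x z "-1"] by simp

lemma diff_right: "x \<in> Y \<Longrightarrow> y \<in> Y \<Longrightarrow> z \<in> Y \<Longrightarrow> a z (x - y) = a z x - a z y"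
  using diff_left[of x y z] diff_mem symmetric by metis

lemma scaleR_left: "x \<in> Y \<Longrightarrow> z \<in> Y \<Longrightarrow> a (r *\<^sub>R x) z = r * a x z"
  using linear_left[of x 0 z r] zero_mem diff_left[of 0 0 z] by simp

lemma scaleR_right: "x \<in> Y \<Longrightarrow> z \<in> Y \<Longrightarrow> a z (r *\<^sub>R x) = r * a z x"
  using scaleR_left[of x z r] symmetric subspace_scale[OF subspace] by metis

lemma expand_diff_scaleR:
  assumes "x \<in> Y" "y \<in> Y"
  shows "a (x - r *\<^sub>R y) (x - r *\<^sub>R y) = a x x - 2 * r * a x y + r\<^sup>2 * a y y"
proof -
  have ry: "r *\<^sub>R y \<in> Y" using assms subspace_scale[OF subspace] by blast
  then show ?thesis
    using assms diff_mem[OF assms(1) ry]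
    by (simp add: diff_left diff_right scaleR_left scaleR_right symmetric[of x y] power2_eq_square algebra_simps)
qed

lemma expand_add:
  assumes "x \<in> Y" "y \<in> Y"
  shows "a (x + y) (x + y) = a x x + 2 * a x y + a y y"
  using expand_diff_scaleR[OF assms, of "- 1"] by simp

lemma two_mult_le_add: "x \<in> Y \<Longrightarrow> y \<in> Y \<Longrightarrow> 2 * a x y \<le> a x x + a y y"
  using expand_diff_scaleR[of x y 1] nonneg[of "x - y"] diff_mem by simp

lemma normD_nonneg: "x \<in> Y \<Longrightarrow> 0 \<le> normD a x"
  unfolding normD_def by (simp add: nonneg)

lemma normD_sq: "x \<in> Y \<Longrightarrow> (normD a x)\<^sup>2 = a x x"
  unfolding normD_def by (simp add: nonneg)

lemma cauchy_schwarz: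
  assumes "x \<in> Y" "y \<in> Y"
  shows "a x y \<le> normD a x * normD a y"
proof -
  have quadratic_nonneg: "0 \<le> a x x - 2 * r * a x y + r\<^sup>2 * a y y" for r
    using nonneg[OF diff_mem[OF assms(1) subspace_scale[OF subspace assms(2)]]]
    by (simp add: expand_diff_scaleR[OF assms])
  show ?thesis
  proof (cases "a y y = 0")
    case True
    have "a x y \<le> 0"
    proof (rule ccontr)
      assume "\<not> a x y \<le> 0"
      with quadratic_nonneg[of "(a x x + 1) / (2 * a x y)"] True show False
        by simp
    qed
    then show ?thesis
      using normD_nonneg assms by (meson mult_nonneg_nonneg order_trans)
  next
    case False
    then have q: "0 < a y y" using nonneg[OF assms(2)] by simp
    have "(a x y)\<^sup>2 \<le> a x x * a y y"
      using quadratic_nonneg[of "a x y / a y y"] q by (simp add: field_simps power2_eq_square)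
    then have "\<bar>a x y\<bar> \<le> sqrt (a x x * a y y)"
      by (simp add: real_le_rsqrt)
    then show ?thesis by (simp add: normD_def real_sqrt_mult)
  qed
qed

lemma normD_triangle:
  assumes "x \<in> Y" "y \<in> Y"
  shows "normD a (x + y) \<le> normD a x + normD a y"
proof -
  have "(normD a (x + y))\<^sup>2 = a x x + 2 * a x y + a y y"
    using assms subspace_add[OF subspace assms] by (simp add: normD_sq expand_add)
  also have "\<dots> \<le> (normD a x + normD a y)\<^sup>2"
    using cauchy_schwarz[OF assms] by (simp add: power2_sum normD_sq assms)
  finally show ?thesis
    by (rule power2_le_imp_le) (simp add: normD_nonneg add_nonneg_nonneg assms)
qed

lemma normD_minus: "x \<in> Y \<Longrightarrow> normD a (- x) = normD a x"
  using scaleR_left[of x "- x" "- 1"] scaleR_right[of x x "- 1"] subspace_neg[OF subspace]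
  by (simp add: normD_def)

lemma normD_zero: "normD a 0 = 0"
  using scaleR_left[OF zero_mem zero_mem, of 0] by (simp add: normD_def)

section \<open>The K-functional\<close>

lemma Kfun_le:
  assumes "0 \<le> t" "y1 \<in> Y" "x = y0 + y1"
  shows "Kfun Y a t x \<le> norm y0 + t * normD a y1"
  unfolding Kfun_def
proof (rule cInf_lower)
  show "bdd_below {norm y0 + t * normD a y1 | y0 y1. y1 \<in> Y \<and> x = y0 + y1}"
    by (rule bdd_belowI[of _ 0]) (auto simp: normD_nonneg assms(1))
qed (use assms in blast)

lemma Kfun_greatest:
  assumes "\<And>y0 y1. y1 \<in> Y \<Longrightarrow> x = y0 + y1 \<Longrightarrow> b \<le> norm y0 + t * normD a y1"
  shows "b \<le> Kfun Y a t x"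
  unfolding Kfun_def
proof (rule cInf_greatest)
  show "{norm y0 + t * normD a y1 | y0 y1. y1 \<in> Y \<and> x = y0 + y1} \<noteq> {}"
    using zero_mem by force
qed (use assms in blast)

lemma Kfun_nonneg: "0 \<le> t \<Longrightarrow> 0 \<le> Kfun Y a t x"
  by (rule Kfun_greatest) (simp add: normD_nonneg)

lemma Kfun_le_norm: "0 \<le> t \<Longrightarrow> Kfun Y a t x \<le> norm x"
  using Kfun_le[of t 0 x x] zero_mem by (simp add: normD_zero)

lemma Kfun_le_normD: "0 \<le> t \<Longrightarrow> x \<in> Y \<Longrightarrow> Kfun Y a t x \<le> t * normD a x"
  using Kfun_le[of t x x 0] by simp

lemma Kfun_mono:
  assumes "0 \<le> \<tau>" "\<tau> \<le> t"
  shows "Kfun Y a \<tau> x \<le> Kfun Y a t x"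
proof (rule Kfun_greatest)
  fix y0 y1 assume y1: "y1 \<in> Y" and x: "x = y0 + y1"
  have "Kfun Y a \<tau> x \<le> norm y0 + \<tau> * normD a y1"
    using Kfun_le[OF assms(1) y1 x] .
  also have "\<dots> \<le> norm y0 + t * normD a y1"
    using assms normD_nonneg[OF y1] by (simp add: mult_right_mono)
  finally show "Kfun Y a \<tau> x \<le> norm y0 + t * normD a y1" .
qed

lemma Kfun_ge_scaled:
  assumes "0 < t" "t \<le> \<tau>"
  shows "t / \<tau> * Kfun Y a \<tau> x \<le> Kfun Y a t x"
proof (rule Kfun_greatest)
  fix y0 y1 assume y1: "y1 \<in> Y" and x: "x = y0 + y1"
  have "t / \<tau> * Kfun Y a \<tau> x \<le> t / \<tau> * (norm y0 + \<tau> * normD a y1)"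
    using Kfun_le[OF _ y1 x, of \<tau>] assms by (intro mult_left_mono) auto
  also have "\<dots> = t / \<tau> * norm y0 + t * normD a y1"
    using assms by (simp add: field_simps)
  also have "\<dots> \<le> norm y0 + t * normD a y1"
    using assms mult_right_mono[of "t / \<tau>" 1 "norm y0"] by simp
  finally show "t / \<tau> * Kfun Y a \<tau> x \<le> norm y0 + t * normD a y1" .
qed

lemma Kint_ge_tail:
  assumes "0 < s" "0 < \<tau>"
  shows "ennreal ((Kfun Y a \<tau> x)\<^sup>2 * \<tau> powr (- 2 * s) / (2 * s)) \<le> Kint Y a s x"
proof -
  let ?K = "Kfun Y a \<tau> x"
  have "((\<lambda>t. ?K\<^sup>2 * t powr (- 2 * s - 1)) has_integral ?K\<^sup>2 * \<tau> powr (- 2 * s) / (2 * s)) {\<tau>..}"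
    using has_integral_mult_right[OF has_integral_powr_to_inf[of "- 2 * s - 1" \<tau>]] assms by simp
  then show ?thesis
    unfolding Kint_def
  proof (rule nn_integral_ge_has_integral)
    fix t assume "t \<in> {\<tau>..}"
    then have t: "0 < t" "\<tau> \<le> t" using assms by auto
    have "?K\<^sup>2 \<le> (Kfun Y a t x)\<^sup>2"
      using Kfun_mono[of \<tau> t x] Kfun_nonneg[of \<tau> x] t assms by (intro power_mono) auto
    then show "ennreal (?K\<^sup>2 * t powr (- 2 * s - 1))
        \<le> indicator {0<..} t * ennreal ((t powr (- s) * Kfun Y a t x)\<^sup>2 / t)"
      using t by (simp add: Kint_integrand_eq mult_right_mono)
  qed simp
qed

lemma Kint_ge_head:
  assumes "s < 1" "0 < \<tau>"
  shows "ennreal ((Kfun Y a \<tau> x)\<^sup>2 * \<tau> powr (- 2 * s) / (2 * (1 - s))) \<le> Kint Y a s x"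
proof -
  let ?K = "Kfun Y a \<tau> x"
  have "\<tau> powr (1 - 2 * s + 1) = \<tau>\<^sup>2 * \<tau> powr (- 2 * s)"
    using powr_two_add[OF assms(2), of "- 2 * s"] by simp
  then have "((\<lambda>t. (?K / \<tau>)\<^sup>2 * t powr (1 - 2 * s)) has_integral
      ?K\<^sup>2 * \<tau> powr (- 2 * s) / (2 * (1 - s))) {0..\<tau>}"
    using has_integral_mult_right[OF has_integral_powr_from_0[of "1 - 2 * s" \<tau>], of "(?K / \<tau>)\<^sup>2"]
      assms by (simp add: power_divide)
  then show ?thesis
    unfolding Kint_def
  proof (rule nn_integral_ge_has_integral)
    fix t assume t: "t \<in> {0..\<tau>}"
    show "ennreal ((?K / \<tau>)\<^sup>2 * t powr (1 - 2 * s))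
        \<le> indicator {0<..} t * ennreal ((t powr (- s) * Kfun Y a t x)\<^sup>2 / t)"
    proof (cases "t = 0")
      case False
      then have t: "0 < t" "t \<le> \<tau>" using t by auto
      have "(t / \<tau> * ?K)\<^sup>2 \<le> (Kfun Y a t x)\<^sup>2"
        using Kfun_ge_scaled[OF t] Kfun_nonneg[of \<tau> x] t assms by (intro power_mono) auto
      moreover have "(?K / \<tau>)\<^sup>2 * t powr (1 - 2 * s) = (t / \<tau> * ?K)\<^sup>2 * t powr (- 2 * s - 1)"
        using powr_two_add[OF t(1), of "- 2 * s - 1"] by (simp add: power_mult_distrib power_divide)
      ultimately show ?thesis
        using t by (simp add: Kint_integrand_eq mult_right_mono)
    qed simp
  qed simp
qed

lemma Kfun_sq_le_interp_norm:
  assumes s: "0 < s" "s < 1" and "0 < \<tau>" and fin: "Kint Y a s x < \<infinity>"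
  shows "(Kfun Y a \<tau> x)\<^sup>2 * \<tau> powr (- 2 * s) \<le> 2 * (interp_norm Y a s x)\<^sup>2"
proof -
  define I where "I = enn2real (Kint Y a s x)"
  define q where "q = (Kfun Y a \<tau> x)\<^sup>2 * \<tau> powr (- 2 * s)"
  have le_I: "r \<le> I" if "ennreal r \<le> Kint Y a s x" "0 \<le> r" for r
    using enn2real_mono[OF that(1) fin[unfolded infinity_ennreal_def]] that(2) unfolding I_def by simp
  have "q / (2 * s) \<le> I" "q / (2 * (1 - s)) \<le> I"
    using le_I Kint_ge_tail[OF s(1) \<open>0 < \<tau>\<close>] Kint_ge_head[OF s(2) \<open>0 < \<tau>\<close>] s
    unfolding q_def by auto
  \<comment> \<open>each bound degenerates at one end of (0, 1); their convex combination does not\<close>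
  then have "q = (1 - s) * q + s * q" "q \<le> 2 * s * I" "q \<le> 2 * (1 - s) * I"
    using s by (auto simp: field_simps)
  then have "q \<le> 4 * s * (1 - s) * I"
    using s mult_left_mono[of q "2 * s * I" "1 - s"] mult_left_mono[of q "2 * (1 - s) * I" s] by argo
  moreover have "(interp_norm Y a s x)\<^sup>2 = 2 * s * (1 - s) * I"
    using s unfolding interp_norm_def I_def by simp
  ultimately show ?thesis unfolding q_def by simp
qed

lemma Kfun_le_interp_norm:
  assumes s: "s \<in> {0..1}" and x: "x \<in> interp_space Y a s" and "0 < \<tau>"
  shows "Kfun Y a \<tau> x \<le> sqrt 2 * \<tau> powr s * interp_norm Y a s x"
proof -
  consider "s = 0" | "s = 1" | "0 < s" "s < 1" using s by fastforce
  then show ?thesis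
  proof cases
    case 1
    have "Kfun Y a \<tau> x \<le> 1 * norm x"
      using Kfun_le_norm[of \<tau> x] \<open>0 < \<tau>\<close> by simp
    also have "\<dots> \<le> sqrt 2 * norm x"
      by (rule mult_right_mono) auto
    finally show ?thesis
      using 1 \<open>0 < \<tau>\<close> by (simp add: interp_norm_def)
  next
    case 2
    then have "x \<in> Y" using x by (simp add: interp_space_def)
    have "Kfun Y a \<tau> x \<le> 1 * (\<tau> * normD a x)"
      using Kfun_le_normD[of \<tau> x] \<open>0 < \<tau>\<close> \<open>x \<in> Y\<close> by simp
    also have "\<dots> \<le> sqrt 2 * (\<tau> * normD a x)"
      using \<open>0 < \<tau>\<close> normD_nonneg[OF \<open>x \<in> Y\<close>] by (intro mult_right_mono) auto
    finally show ?thesis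
      using 2 \<open>0 < \<tau>\<close> by (simp add: interp_norm_def mult.assoc)
  next
    case 3
    have "Kint Y a s x < \<infinity>" using x 3 by (simp add: interp_space_def)
    then have "(Kfun Y a \<tau> x)\<^sup>2 * \<tau> powr (- 2 * s) * (\<tau> powr s)\<^sup>2
        \<le> 2 * (interp_norm Y a s x)\<^sup>2 * (\<tau> powr s)\<^sup>2"
      using Kfun_sq_le_interp_norm 3 \<open>0 < \<tau>\<close> by (intro mult_right_mono) auto
    then have "(Kfun Y a \<tau> x)\<^sup>2 \<le> (sqrt 2 * \<tau> powr s * interp_norm Y a s x)\<^sup>2"
      using \<open>0 < \<tau>\<close> by (simp add: power_mult_distrib powr_minus powr_powr[symmetric] field_simps)
    then show ?thesis
      by (rule power2_le_imp_le) (use 3 in \<open>simp add: interp_norm_def\<close>)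
  qed
qed

lemma interp_norm_nonneg:
  "s \<in> {0..1} \<Longrightarrow> x \<in> interp_space Y a s \<Longrightarrow> 0 \<le> interp_norm Y a s x"
  by (auto simp: interp_norm_def interp_space_def normD_nonneg)

section \<open>Galerkin error estimates\<close>

lemma galerkin_sol_minimizes:
  assumes V: "subspace V" "V \<subseteq> Y" and G: "galerkin_sol a V \<rho> ybar y" and "0 \<le> \<rho>"
    and z: "z \<in> V"
  shows "(norm (y - ybar))\<^sup>2 \<le> (norm (z - ybar))\<^sup>2 + \<rho> * a z z"
proof -
  define d where "d = z - y"
  have y: "y \<in> V" using G by (simp add: galerkin_sol_def)
  have d: "d \<in> V" unfolding d_def using V(1) z y by (rule subspace_diff)
  then have "inner y d + \<rho> * a y d = inner ybar d"
    using G by (simp add: galerkin_sol_def)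
  then have orth: "inner (y - ybar) d + \<rho> * a y d = 0"
    by (simp add: inner_diff_left)
  have "(norm (z - ybar))\<^sup>2 = (norm (y - ybar))\<^sup>2 + 2 * inner (y - ybar) d + (norm d)\<^sup>2"
    unfolding d_def by (simp add: power2_norm_eq_inner algebra_simps inner_commute)
  moreover have "a z z = a y y + 2 * a y d + a d d"
    using y d V(2) expand_add[of y d] by (auto simp: d_def)
  ultimately have "(norm (z - ybar))\<^sup>2 + \<rho> * a z z
      = (norm (y - ybar))\<^sup>2 + (norm d)\<^sup>2 + \<rho> * a y y + \<rho> * a d d
        + 2 * (inner (y - ybar) d + \<rho> * a y d)"
    by (simp add: algebra_simps)
  then have "(norm (z - ybar))\<^sup>2 + \<rho> * a z z
      = (norm (y - ybar))\<^sup>2 + (norm d)\<^sup>2 + \<rho> * a y y + \<rho> * a d d"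
    unfolding orth by simp
  moreover have "0 \<le> \<rho> * a y y" "0 \<le> \<rho> * a d d"
    using y d V(2) \<open>0 \<le> \<rho>\<close> nonneg by auto
  ultimately show ?thesis
    using zero_le_power2[of "norm d"] by linarith
qed

lemma galerkin_error_le:
  assumes V: "subspace V" "V \<subseteq> Y" and G: "galerkin_sol a V (t\<^sup>2) ybar y" and "0 \<le> t"
    and z: "z \<in> V"
  shows "norm (y - ybar) \<le> norm (z - ybar) + t * normD a z"
proof -
  have zY: "z \<in> Y" using z V(2) by auto
  have "(norm (y - ybar))\<^sup>2 \<le> (norm (z - ybar))\<^sup>2 + (t * normD a z)\<^sup>2"
    using galerkin_sol_minimizes[OF V G _ z] zY by (simp add: power_mult_distrib normD_sq)
  also have "\<dots> \<le> (norm (z - ybar) + t * normD a z)\<^sup>2"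
    using \<open>0 \<le> t\<close> normD_nonneg[OF zY] by (simp add: power2_sum)
  finally show ?thesis
    by (rule power2_le_imp_le) (use \<open>0 \<le> t\<close> normD_nonneg[OF zY] in simp)
qed

lemma galerkin_error_le_Kfun:
  assumes V: "subspace V" "V \<subseteq> Y" and G: "galerkin_sol a V (t\<^sup>2) ybar y" and "0 < t"
    and P: "\<And>v. v \<in> Y \<Longrightarrow> P v \<in> V"
    and approx: "\<And>v. v \<in> Y \<Longrightarrow> norm (v - P v) \<le> c1 * t * normD a v"
      "\<And>v. v \<in> Y \<Longrightarrow> normD a (v - P v) \<le> c2 * normD a v"
    and "0 \<le> c1" "0 \<le> c2"
  shows "norm (y - ybar) \<le> (1 + c1 + c2) * Kfun Y a t ybar"
proof -
  have "norm (y - ybar) / (1 + c1 + c2) \<le> Kfun Y a t ybar"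
  proof (rule Kfun_greatest)
    fix y0 y1 assume y1: "y1 \<in> Y" and ybar: "ybar = y0 + y1"
    let ?z = "P y1"
    have zY: "?z \<in> Y" and eY: "y1 - ?z \<in> Y" using P[OF y1] V(2) y1 diff_mem by auto
    have "norm (?z - ybar) = norm (y0 + (y1 - ?z))"
      unfolding ybar by (metis minus_diff_eq norm_minus_cancel add_diff_eq diff_diff_eq2)
    also have "\<dots> \<le> norm y0 + c1 * t * normD a y1"
      using norm_triangle_ineq[of y0 "y1 - ?z"] approx(1)[OF y1] by simp
    finally have "norm (?z - ybar) \<le> norm y0 + c1 * t * normD a y1" .
    moreover have "normD a ?z \<le> (1 + c2) * normD a y1"
      using normD_triangle[OF y1 subspace_neg[OF subspace eY]] normD_minus[OF eY] approx(2)[OF y1]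
      by (simp add: algebra_simps)
    ultimately have "norm (y - ybar) \<le> norm y0 + (1 + c1 + c2) * (t * normD a y1)"
      using galerkin_error_le[OF V G _ P[OF y1]] \<open>0 < t\<close>
        mult_left_mono[of "normD a ?z" "(1 + c2) * normD a y1" t]
      by (simp add: algebra_simps)
    also have "\<dots> \<le> (1 + c1 + c2) * (norm y0 + t * normD a y1)"
      using \<open>0 \<le> c1\<close> \<open>0 \<le> c2\<close> mult_right_mono[of 1 "1 + c1 + c2" "norm y0"]
      by (simp add: algebra_simps)
    finally show "norm (y - ybar) / (1 + c1 + c2) \<le> norm y0 + t * normD a y1"
      using \<open>0 \<le> c1\<close> \<open>0 \<le> c2\<close> by (simp add: divide_le_eq mult.commute)
  qed
  then show ?thesis
    using \<open>0 \<le> c1\<close> \<open>0 \<le> c2\<close> by (simp add: divide_le_eq mult.commute)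
qed

text \<open>Duality argument: test the Galerkin equation with y - z and use a ybar = inner w.\<close>

lemma galerkin_dual_error:
  assumes V: "subspace V" "V \<subseteq> Y" and G: "galerkin_sol a V (t\<^sup>2) ybar y" and "0 \<le> t"
    and z: "z \<in> V" and D: "D_rep Y a ybar w"
  shows "norm (y - z) \<le> norm (ybar - z) + t\<^sup>2 * norm w + t * normD a (ybar - z)"
proof -
  define d where "d = y - z"
  define \<eta> where "\<eta> = ybar - z"
  have y: "y \<in> V" using G by (simp add: galerkin_sol_def)
  have d: "d \<in> V" unfolding d_def using V(1) y z by (rule subspace_diff)
  have ybarY: "ybar \<in> Y" and w: "\<And>v. v \<in> Y \<Longrightarrow> a ybar v = inner w v"
    using D by (auto simp: D_rep_def)
  have dY: "d \<in> Y" and zY: "z \<in> Y" using d z V(2) by auto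
  have \<eta>Y: "\<eta> \<in> Y" unfolding \<eta>_def using ybarY zY by (rule diff_mem)
  have "inner y d + t\<^sup>2 * a y d = inner ybar d"
    using G d by (simp add: galerkin_sol_def)
  moreover have "a y d = a d d + inner w d - a \<eta> d"
    using add_left[OF dY zY dY] diff_left[OF ybarY \<eta>Y dY] w[OF dY]
    by (simp add: d_def \<eta>_def)
  moreover have "inner y d - inner ybar d = (norm d)\<^sup>2 - inner \<eta> d"
    by (simp add: d_def \<eta>_def power2_norm_eq_inner inner_diff_left)
  ultimately have eq: "(norm d)\<^sup>2 + t\<^sup>2 * a d d = inner \<eta> d - t\<^sup>2 * inner w d + t\<^sup>2 * a \<eta> d"
    by (simp add: algebra_simps)
  have "inner \<eta> d - t\<^sup>2 * inner w d \<le> (norm \<eta> + t\<^sup>2 * norm w) * norm d"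
    using norm_cauchy_schwarz[of \<eta> d] norm_cauchy_schwarz[of "- w" d]
      mult_left_mono[of "- inner w d" "norm w * norm d" "t\<^sup>2"]
    by (simp add: algebra_simps)
  moreover have "t\<^sup>2 * a \<eta> d \<le> t\<^sup>2 * a d d + (t * normD a \<eta>)\<^sup>2"
  proof -
    have "2 * (t\<^sup>2 * a \<eta> d) \<le> t\<^sup>2 * a \<eta> \<eta> + t\<^sup>2 * a d d"
      using mult_left_mono[OF two_mult_le_add[OF \<eta>Y dY], of "t\<^sup>2"] by (simp add: algebra_simps)
    moreover have "0 \<le> t\<^sup>2 * a \<eta> \<eta>" "0 \<le> t\<^sup>2 * a d d"
      using nonneg[OF \<eta>Y] nonneg[OF dY] by simp_all
    ultimately show ?thesis
      by (simp add: power_mult_distrib normD_sq[OF \<eta>Y])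
  qed
  ultimately have "(norm d)\<^sup>2 \<le> (norm \<eta> + t\<^sup>2 * norm w) * norm d + (t * normD a \<eta>)\<^sup>2"
    using eq by linarith
  then have "norm d \<le> norm \<eta> + t\<^sup>2 * norm w + t * normD a \<eta>"
    by (rule sq_le_mult_add_sq_imp_le[rotated 3]) (use \<open>0 \<le> t\<close> normD_nonneg[OF \<eta>Y] in auto)
  then show ?thesis unfolding d_def \<eta>_def .
qed

lemma galerkin_error_le_D_rep:
  assumes V: "subspace V" "V \<subseteq> Y" and G: "galerkin_sol a V (t\<^sup>2) ybar y" and "0 \<le> t"
    and z: "z \<in> V" and D: "D_rep Y a ybar w"
    and approx: "norm (ybar - z) \<le> c3 * t\<^sup>2 * norm w" "normD a (ybar - z) \<le> c4 * t * norm w"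
  shows "norm (y - ybar) \<le> (1 + 2 * c3 + c4) * t\<^sup>2 * norm w"
proof -
  have "norm (y - ybar) \<le> norm (y - z) + norm (ybar - z)"
    by (rule norm_diff_triangle_le) (auto simp: norm_minus_commute)
  also have "\<dots> \<le> 2 * norm (ybar - z) + t\<^sup>2 * norm w + t * normD a (ybar - z)"
    using galerkin_dual_error[OF V G \<open>0 \<le> t\<close> z D] by simp
  also have "\<dots> \<le> 2 * (c3 * t\<^sup>2 * norm w) + t\<^sup>2 * norm w + t * (c4 * t * norm w)"
    using approx \<open>0 \<le> t\<close> by (intro add_mono mult_left_mono) auto
  also have "\<dots> = (1 + 2 * c3 + c4) * t\<^sup>2 * norm w"
    by (simp add: power2_eq_square algebra_simps)
  finally show ?thesis .
qed

end

lemma gelfand_setting_imp_symmetric_psd_form: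
  assumes "gelfand_setting Y iY a"
  shows "symmetric_psd_form Y a"
proof
  show sub: "subspace Y"
    and lin: "\<And>x y z r. x \<in> Y \<Longrightarrow> y \<in> Y \<Longrightarrow> z \<in> Y \<Longrightarrow> a (r *\<^sub>R x + y) z = r * a x z + a y z"
    and "\<And>x y. x \<in> Y \<Longrightarrow> y \<in> Y \<Longrightarrow> a x y = a y x"
    using assms unfolding gelfand_setting_def by blast+
  fix y assume y: "y \<in> Y"
  show "0 \<le> a y y"
  proof (cases "y = 0")
    case True
    then show ?thesis using lin[of 0 0 0 1] subspace_0[OF sub] by simp
  next
    case False
    from assms obtain m where "0 < m" and m: "\<forall>y\<in>Y. m * iY y y \<le> a y y"
      unfolding gelfand_setting_def by auto
    moreover have "0 < iY y y"
      using assms y False unfolding gelfand_setting_def by blast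
    ultimately have "0 \<le> m * iY y y" by simp
    then show ?thesis using m y by (meson order_trans)
  qed
qed

definition scaled_approximation ::
  "'a::real_inner set \<Rightarrow> ('a \<Rightarrow> 'a \<Rightarrow> real) \<Rightarrow> 'a set \<Rightarrow> ('a \<Rightarrow> 'a) \<Rightarrow> real
     \<Rightarrow> real \<Rightarrow> real \<Rightarrow> real \<Rightarrow> real \<Rightarrow> bool" where
  "scaled_approximation Y a V P t c1 c2 c3 c4 \<longleftrightarrow> subspace V \<and> V \<subseteq> Y \<and>
     (\<forall>v\<in>Y. P v \<in> V \<and> norm (v - P v) \<le> c1 * t * normD a v \<and> normD a (v - P v) \<le> c2 * normD a v) \<and>
     (\<forall>v w. D_rep Y a v w \<longrightarrow>
        norm (v - P v) \<le> c3 * t\<^sup>2 * norm w \<and> normD a (v - P v) \<le> c4 * t * norm w)"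

lemma discretization_scaled_approximation:
  assumes "discretization Y a h0 Yh P \<alpha>"
  obtains c1 c2 c3 c4 where "0 \<le> c1" "0 \<le> c2" "0 \<le> c3" "0 \<le> c4"
    and "\<And>h. h \<in> {0<..h0} \<Longrightarrow> scaled_approximation Y a (Yh h) (P h) (h powr \<alpha>) c1 c2 c3 c4"
proof -
  have spaces: "\<forall>h\<in>{0<..h0}. subspace (Yh h) \<and> Yh h \<subseteq> Y \<and> (\<forall>y\<in>Y. P h y \<in> Yh h)"
    using assms unfolding discretization_def by auto
  moreover obtain c1 c2 c3 c4 where "0 < c1" "0 < c2" "0 < c3" "0 < c4"
    and bounds: "\<forall>h\<in>{0<..h0}. \<forall>y\<in>Y.
        norm (y - P h y) \<le> c1 * h powr \<alpha> * normD a y \<and> normD a (y - P h y) \<le> c2 * normD a y \<and>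
        (\<forall>w. D_rep Y a y w \<longrightarrow> norm (y - P h y) \<le> c3 * h powr (2 * \<alpha>) * norm w \<and>
           normD a (y - P h y) \<le> c4 * h powr \<alpha> * norm w)"
    using assms unfolding discretization_def by metis
  moreover have "h powr (2 * \<alpha>) = (h powr \<alpha>)\<^sup>2" for h
    by (simp add: power2_eq_square powr_add[symmetric])
  ultimately show ?thesis
    by (intro that[of c1 c2 c3 c4]) (auto simp: scaled_approximation_def D_rep_def)
qed

context symmetric_psd_form
begin

lemma galerkin_error_bounds:
  fixes c1 c2 c3 c4 :: real
  defines "c \<equiv> sqrt 2 * (1 + c1 + c2) + (1 + 2 * c3 + c4)"
  assumes approx: "scaled_approximation Y a V P t c1 c2 c3 c4" and "0 < t"
    and G: "galerkin_sol a V (t\<^sup>2) ybar y" and "0 \<le> c1" "0 \<le> c2" "0 \<le> c3" "0 \<le> c4"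
  shows "norm (y - ybar) \<le> c * norm ybar \<and>
    (ybar \<in> Y \<longrightarrow> norm (y - ybar) \<le> c * t * normD a ybar) \<and>
    (\<forall>w. D_rep Y a ybar w \<longrightarrow> norm (y - ybar) \<le> c * t\<^sup>2 * norm w) \<and>
    (\<forall>s\<in>{0..1}. ybar \<in> interp_space Y a s \<longrightarrow>
       norm (y - ybar) \<le> c * t powr s * interp_norm Y a s ybar)"
proof -
  have V: "subspace V" "V \<subseteq> Y" and P: "\<And>v. v \<in> Y \<Longrightarrow> P v \<in> V"
    and approx_Y: "\<And>v. v \<in> Y \<Longrightarrow> norm (v - P v) \<le> c1 * t * normD a v"
      "\<And>v. v \<in> Y \<Longrightarrow> normD a (v - P v) \<le> c2 * normD a v"
    and approx_D: "\<And>v w. D_rep Y a v w \<Longrightarrow> norm (v - P v) \<le> c3 * t\<^sup>2 * norm w"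
      "\<And>v w. D_rep Y a v w \<Longrightarrow> normD a (v - P v) \<le> c4 * t * norm w"
    using approx unfolding scaled_approximation_def by auto
  have interp: "norm (y - ybar) \<le> c * t powr s * interp_norm Y a s ybar"
    if "s \<in> {0..1}" "ybar \<in> interp_space Y a s" for s
  proof -
    have "norm (y - ybar) \<le> (1 + c1 + c2) * Kfun Y a t ybar"
      using galerkin_error_le_Kfun[where P = P, OF V G \<open>0 < t\<close> P approx_Y \<open>0 \<le> c1\<close> \<open>0 \<le> c2\<close>] .
    also have "\<dots> \<le> (1 + c1 + c2) * (sqrt 2 * t powr s * interp_norm Y a s ybar)"
      using Kfun_le_interp_norm[OF that \<open>0 < t\<close>] \<open>0 \<le> c1\<close> \<open>0 \<le> c2\<close>
      by (intro mult_left_mono) auto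
    also have "\<dots> = sqrt 2 * (1 + c1 + c2) * (t powr s * interp_norm Y a s ybar)"
      by (simp add: mult_ac)
    also have "\<dots> \<le> c * (t powr s * interp_norm Y a s ybar)"
      using interp_norm_nonneg[OF that] \<open>0 \<le> c3\<close> \<open>0 \<le> c4\<close> unfolding c_def
      by (intro mult_right_mono) auto
    finally show ?thesis by (simp add: mult.assoc)
  qed
  moreover have "norm (y - ybar) \<le> c * t\<^sup>2 * norm w" if D: "D_rep Y a ybar w" for w
  proof -
    have "ybar \<in> Y" using D by (simp add: D_rep_def)
    then have "norm (y - ybar) \<le> (1 + 2 * c3 + c4) * t\<^sup>2 * norm w"
      using galerkin_error_le_D_rep[OF V G _ P D approx_D[OF D]] \<open>0 < t\<close> by simp
    also have "\<dots> \<le> c * t\<^sup>2 * norm w"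
      using \<open>0 \<le> c1\<close> \<open>0 \<le> c2\<close> unfolding c_def by (intro mult_right_mono) auto
    finally show ?thesis .
  qed
  moreover have "norm (y - ybar) \<le> c * norm ybar"
    using interp[of 0] \<open>0 < t\<close> by (simp add: interp_space_def interp_norm_def)
  moreover have "norm (y - ybar) \<le> c * t * normD a ybar" if "ybar \<in> Y"
    using interp[of 1] that \<open>0 < t\<close> by (simp add: interp_space_def interp_norm_def)
  ultimately show ?thesis
    using interp by blast
qed

end

theorem mainTheorem4:
  fixes Y :: "'a::{real_inner,complete_space} set"
    and iY a :: "'a \<Rightarrow> 'a \<Rightarrow> real"
    and h0 \<alpha> :: real and Yh :: "real \<Rightarrow> 'a set" and P :: "real \<Rightarrow> 'a \<Rightarrow> 'a"
  assumes "gelfand_setting Y iY a"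
    and "discretization Y a h0 Yh P \<alpha>"
  shows "\<exists>c>0. \<forall>h\<in>{0<..h0}. \<forall>ybar y.
           galerkin_sol a (Yh h) (h powr (2 * \<alpha>)) ybar y \<longrightarrow>
             norm (y - ybar) \<le> c * norm ybar \<and>
             (ybar \<in> Y \<longrightarrow> norm (y - ybar) \<le> c * h powr \<alpha> * normD a ybar) \<and>
             (\<forall>w. D_rep Y a ybar w \<longrightarrow> norm (y - ybar) \<le> c * h powr (2 * \<alpha>) * norm w) \<and>
             (\<forall>s\<in>{0..1}. ybar \<in> interp_space Y a s \<longrightarrow>
                norm (y - ybar) \<le> c * h powr (\<alpha> * s) * interp_norm Y a s ybar)"
proof -
  interpret symmetric_psd_form Y a
    using assms(1) by (rule gelfand_setting_imp_symmetric_psd_form)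
  obtain c1 c2 c3 c4 where c: "0 \<le> c1" "0 \<le> c2" "0 \<le> c3" "0 \<le> c4"
    and approx: "\<And>h. h \<in> {0<..h0} \<Longrightarrow> scaled_approximation Y a (Yh h) (P h) (h powr \<alpha>) c1 c2 c3 c4"
    using discretization_scaled_approximation[OF assms(2)] by blast
  define c where "c = sqrt 2 * (1 + c1 + c2) + (1 + 2 * c3 + c4)"
  have "0 < c" using c unfolding c_def by (simp add: add_pos_nonneg)
  have t: "0 < h powr \<alpha>" if "h \<in> {0<..h0}" for h
    using that by simp
  have t2: "(h powr \<alpha>)\<^sup>2 = h powr (2 * \<alpha>)" for h
    by (simp add: power2_eq_square powr_add[symmetric])
  note bounds = galerkin_error_bounds[OF approx t _ c, folded c_def, unfolded t2 powr_powr]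
  show ?thesis
    by (intro exI[of _ c] conjI[OF \<open>0 < c\<close>] ballI allI impI bounds)
qed

end
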